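(* If the pointed Kripke models $(\mathcal{M},v)$ and $(\mathcal{M}',v')$ are $G$-bisimilar for a group $G\subseteq\mathcal{A}$ and $\varphi$ is a DBI formula with $\mathsf{ta}(\varphi)\subseteq G$, then $\mathcal{M},v\vDash\varphi$ iff $\mathcal{M}',v'\vDash\varphi$.
   Context: Agents $\mathcal{A}=\{1,\dots,n\}$; formulas $\varphi ::= p \mid \neg\varphi \mid (\varphi\wedge\varphi)\mid B_i\varphi$ interpreted on Kripke models $\mathcal{M}=\langle S,R,V\rangle$ in the standard way ($\mathcal{M},w\vDash B_i\varphi$ iff $\varphi$ holds at all $R_i$-successors of $w$). Pointed Kripke models are bisimilar iff there is a bisimulation (a nonempty relation satisfying the standard Forth, Back, and Atoms conditions for all agents) relating their points. $(\mathcal{M},v)$ and $(\mathcal{M}',v')$ are $G$-bisimilar iff for every $a\in G$: ($G$-Forth) if $vR_au$ then there is $u'$ with $v'R'_au'$ and $(\mathcal{M},u)$ bisimilar to $(\mathcal{M}',u')$; ($G$-Back) if $v'R'_au'$ then there is $u$ with $vR_au$ and $(\mathcal{M},u)$ bisimilar to $(\mathcal{M}',u')$. Target agents: $\mathsf{ta}(p)=\varnothing$, $\mathsf{ta}(\neg\phi)=\mathsf{ta}(\phi)$, $\mathsf{ta}(\phi\wedge\psi)=\mathsf{ta}(\phi)\cup\mathsf{ta}(\psi)$, $\mathsf{ta}(B_i\phi)=\{i\}$. DBI (deterministic belief increase) goal formulas are given by $\varphi ::= B_i\xi \mid B_i(\xi\wedge\varphi)\mid(\varphi\wedge\varphi)\mid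 B_i\varphi$ with $\xi$ purely propositional, i.e., nonempty conjunctions of formulas of the form $B_i\psi$. *)

theory Defs
  imports Main
begin

datatype ('p, 'a) fm = Atom 'p | Neg "('p, 'a) fm" | Conj "('p, 'a) fm" "('p, 'a) fm"
  | Bel 'a "('p, 'a) fm"

record ('a, 's, 'p) kripke =
  St :: "'s set"
  Rel :: "'a \<Rightarrow> 's \<Rightarrow> 's \<Rightarrow> bool"
  Val :: "'s \<Rightarrow> 'p \<Rightarrow> bool"

definition kripke_model :: "('a, 's, 'p) kripke \<Rightarrow> bool" where
  "kripke_model M \<longleftrightarrow> St M \<noteq> {} \<and>
     (\<forall>i w u. Rel M i w u \<longrightarrow> w \<in> St M \<and> u \<in> St M)"

fun sat :: "('a, 's, 'p) kripke \<Rightarrow> 's \<Rightarrow> ('p, 'a) fm \<Rightarrow> bool" where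
  "sat M w (Atom p) = Val M w p"
| "sat M w (Neg \<phi>) = (\<not> sat M w \<phi>)"
| "sat M w (Conj \<phi> \<psi>) = (sat M w \<phi> \<and> sat M w \<psi>)"
| "sat M w (Bel i \<phi>) = (\<forall>u. Rel M i w u \<longrightarrow> sat M u \<phi>)"

definition bisimulation ::
  "('a, 's, 'p) kripke \<Rightarrow> ('a, 't, 'p) kripke \<Rightarrow> ('s \<Rightarrow> 't \<Rightarrow> bool) \<Rightarrow> bool" where
  "bisimulation M M' Z \<longleftrightarrow> (\<exists>w w'. Z w w') \<and>
     (\<forall>w w'. Z w w' \<longrightarrow> w \<in> St M \<and> w' \<in> St M' \<and>
        (\<forall>p. Val M w p = Val M' w' p) \<and>
        (\<forall>i u. Rel M i w u \<longrightarrow> (\<exists>u'. Rel M' i w' u' \<and> Z u u')) \<and>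
        (\<forall>i u'. Rel M' i w' u' \<longrightarrow> (\<exists>u. Rel M i w u \<and> Z u u')))"

definition bisimilar ::
  "('a, 's, 'p) kripke \<Rightarrow> 's \<Rightarrow> ('a, 't, 'p) kripke \<Rightarrow> 't \<Rightarrow> bool" where
  "bisimilar M w M' w' \<longleftrightarrow> (\<exists>Z. bisimulation M M' Z \<and> Z w w')"

definition G_bisimilar ::
  "'a set \<Rightarrow> ('a, 's, 'p) kripke \<Rightarrow> 's \<Rightarrow> ('a, 't, 'p) kripke \<Rightarrow> 't \<Rightarrow> bool" where
  "G_bisimilar G M v M' v' \<longleftrightarrow> (\<forall>a\<in>G.
     (\<forall>u. Rel M a v u \<longrightarrow> (\<exists>u'. Rel M' a v' u' \<and> bisimilar M u M' u')) \<and>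
     (\<forall>u'. Rel M' a v' u' \<longrightarrow> (\<exists>u. Rel M a v u \<and> bisimilar M u M' u')))"

fun ta :: "('p, 'a) fm \<Rightarrow> 'a set" where
  "ta (Atom p) = {}"
| "ta (Neg \<phi>) = ta \<phi>"
| "ta (Conj \<phi> \<psi>) = ta \<phi> \<union> ta \<psi>"
| "ta (Bel i \<phi>) = {i}"

fun propositional :: "('p, 'a) fm \<Rightarrow> bool" where
  "propositional (Atom p) = True"
| "propositional (Neg \<phi>) = propositional \<phi>"
| "propositional (Conj \<phi> \<psi>) = (propositional \<phi> \<and> propositional \<psi>)"
| "propositional (Bel i \<phi>) = False"

inductive DBI :: "('p, 'a) fm \<Rightarrow> bool" where
  DBI_B: "propositional \<xi> \<Longrightarrow> DBI (Bel i \<xi>)"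
| DBI_Bconj: "propositional \<xi> \<Longrightarrow> DBI \<phi> \<Longrightarrow> DBI (Bel i (Conj \<xi> \<phi>))"
| DBI_conj: "DBI \<phi> \<Longrightarrow> DBI \<psi> \<Longrightarrow> DBI (Conj \<phi> \<psi>)"
| DBI_BB: "DBI \<phi> \<Longrightarrow> DBI (Bel i \<phi>)"

end

theory Submission
  imports Defs
begin

text \<open>Truth is invariant under bisimulation. \<open>G\<close>-bisimilarity matches the \<open>a\<close>-successors of the
  two points, for \<open>a \<in> G\<close>, up to bisimilarity, so it preserves every formula \<open>B\<^sub>a \<psi>\<close> with
  \<open>a \<in> G\<close>, and hence every Boolean combination of such formulas. A DBI formula is such a
  combination: it has no atom outside the scope of a belief operator.\<close>

lemma bisimulation_sat:
  assumes "bisimulation M M' Z" and "Z w w'"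
  shows "sat M w \<phi> \<longleftrightarrow> sat M' w' \<phi>"
  using assms(2)
proof (induction \<phi> arbitrary: w w')
  case (Atom p)
  then show ?case using assms(1) unfolding bisimulation_def by auto
next
  case (Bel i \<phi>)
  have zig: "\<And>u. Rel M i w u \<Longrightarrow> \<exists>u'. Rel M' i w' u' \<and> Z u u'"
    and zag: "\<And>u'. Rel M' i w' u' \<Longrightarrow> \<exists>u. Rel M i w u \<and> Z u u'"
    using assms(1) Bel.prems unfolding bisimulation_def by blast+
  show ?case using zig zag Bel.IH by fastforce
qed simp_all

lemma bisimilar_sat: "bisimilar M w M' w' \<Longrightarrow> sat M w \<phi> \<longleftrightarrow> sat M' w' \<phi>"
  unfolding bisimilar_def using bisimulation_sat by metis

lemma G_bisimilar_sat_Bel: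
  assumes "G_bisimilar G M v M' v'" and "i \<in> G"
  shows "sat M v (Bel i \<phi>) \<longleftrightarrow> sat M' v' (Bel i \<phi>)"
proof -
  have zig: "\<And>u. Rel M i v u \<Longrightarrow> \<exists>u'. Rel M' i v' u' \<and> bisimilar M u M' u'"
    and zag: "\<And>u'. Rel M' i v' u' \<Longrightarrow> \<exists>u. Rel M i v u \<and> bisimilar M u M' u'"
    using assms unfolding G_bisimilar_def by blast+
  show ?thesis using zig zag bisimilar_sat by fastforce
qed

fun belief_combination :: "('p, 'a) fm \<Rightarrow> bool" where
  "belief_combination (Atom p) = False"
| "belief_combination (Neg \<phi>) = belief_combination \<phi>"
| "belief_combination (Conj \<phi> \<psi>) = (belief_combination \<phi> \<and> belief_combination \<psi>)"
| "belief_combination (Bel i \<phi>) = True"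

lemma G_bisimilar_sat:
  assumes "G_bisimilar G M v M' v'" and "belief_combination \<phi>" and "ta \<phi> \<subseteq> G"
  shows "sat M v \<phi> \<longleftrightarrow> sat M' v' \<phi>"
  using assms(2,3)
proof (induction \<phi>)
  case (Bel i \<phi>)
  then show ?case using G_bisimilar_sat_Bel[OF assms(1)] by simp
qed simp_all

lemma DBI_belief_combination: "DBI \<phi> \<Longrightarrow> belief_combination \<phi>"
  by (induction rule: DBI.induct) simp_all

text \<open>The models need not be well-formed, nor the points be states, for the argument.\<close>

theorem lemma2:
  fixes M :: "('a, 's, 'p) kripke" and M' :: "('a, 't, 'p) kripke"
    and G :: "'a set" and \<phi> :: "('p, 'a) fm"
  assumes "kripke_model M" and "kripke_model M'"
    and "v \<in> St M" and "v' \<in> St M'"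
    and "G_bisimilar G M v M' v'"
    and "DBI \<phi>" and "ta \<phi> \<subseteq> G"
  shows "sat M v \<phi> \<longleftrightarrow> sat M' v' \<phi>"
  using G_bisimilar_sat[OF assms(5) DBI_belief_combination[OF assms(6)] assms(7)] .

end
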